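(* Let $\Lambda_1\geq 0$ and $\Lambda_2>1$. Let $F(z)=|z|^2G(z)+H(z)$, $z\in\mathbb{D}$, where $G$ is analytic in $\mathbb{D}$ and $H$ is analytic in $\mathbb{D}$ with $H(0)=0$, $H'(0)=1$ (so $F$ is biharmonic in $\mathbb{D}$). (1) If $|G(z)+zG'(z)|\leq\Lambda_1$ and $|H'(z)|<\Lambda_2$ for all $z\in\mathbb{D}$, then $F$ is univalent in $\mathbb{D}_{\rho_1}$ and $F(\mathbb{D}_{\rho_1})\supseteq\mathbb{D}_{\sigma_1}$, where $$\rho_1=\frac{2\Lambda_2}{\Lambda_2(2\Lambda_1+\Lambda_2)+\sqrt{\Lambda_2^2(2\Lambda_1+\Lambda_2)^2-8\Lambda_1\Lambda_2}},\qquad \sigma_1=\Lambda_2^2\rho_1-\Lambda_1\rho_1^2+(\Lambda_2^3-\Lambda_2)\ln\Big(1-\frac{\rho_1}{\Lambda_2}\Big).$$ This result is sharp, with extremal function $F_1(z)=\Lambda_2^2 z-\Lambda_1|z|^2+(\Lambda_2^3-\Lambda_2)\ln(1-z/\Lambda_2)$. (2) If $|G(z)+zG'(z)|\leq\Lambda_1$ for all $z\in\mathbb{D}$, and either $|H(z)|<1$ for all $z\in\mathbb{D}$ or $|H'(z)|\leq 1$ for all $z\in\mathbb{D}$, then $F$ is univalent in $\mathbb{D}_{\rho_2}$ and $F(\mathbb{D}_{\rho_2})\supseteq\mathbb{D}_{\sigma_2}$, where $\rho_2=1$ if $\Lambda_1\leq 1/2$, $\rho_2=1/(2\Lambda_1)$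 if $\Lambda_1>1/2$, and $\sigma_2=\rho_2-\Lambda_1\rho_2^2$. This result is sharp, with extremal function $F_2(z)=\Lambda_1|z|^2+z$.
   Context: $\mathbb{D}=\{z:|z|<1\}$ and $\mathbb{D}_r=\{z\in\mathbb{C}:|z|<r\}$. "Sharp" means the radii $\rho_i$ and $\sigma_i$ cannot be replaced by larger numbers. *)

theory Defs
  imports "HOL-Analysis.Analysis"
begin

definition rho1 :: "real \<Rightarrow> real \<Rightarrow> real" where
  "rho1 L1 L2 = 2 * L2 /
     (L2 * (2 * L1 + L2) + sqrt (L2\<^sup>2 * (2 * L1 + L2)\<^sup>2 - 8 * L1 * L2))"

definition sigma1 :: "real \<Rightarrow> real \<Rightarrow> real" where
  "sigma1 L1 L2 = L2\<^sup>2 * rho1 L1 L2 - L1 * (rho1 L1 L2)\<^sup>2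
     + (L2 ^ 3 - L2) * ln (1 - rho1 L1 L2 / L2)"

definition F1_ext :: "real \<Rightarrow> real \<Rightarrow> complex \<Rightarrow> complex" where
  "F1_ext L1 L2 z = complex_of_real (L2\<^sup>2) * z - complex_of_real (L1 * (cmod z)\<^sup>2)
     + complex_of_real (L2 ^ 3 - L2) * Ln (1 - z / complex_of_real L2)"

definition rho2 :: "real \<Rightarrow> real" where
  "rho2 L1 = (if L1 \<le> 1/2 then 1 else 1 / (2 * L1))"

definition sigma2 :: "real \<Rightarrow> real" where
  "sigma2 L1 = rho2 L1 - L1 * (rho2 L1)\<^sup>2"

definition F2_ext :: "real \<Rightarrow> complex \<Rightarrow> complex" where
  "F2_ext L1 z = complex_of_real (L1 * (cmod z)\<^sup>2) + z"

end

theory Submission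
  imports Defs "HOL-Complex_Analysis.Complex_Analysis"
begin

(* Write F z = cnj z * K z + H z with K z = z * G z. Since K' = G + z G', K is L1-Lipschitz
   with K 0 = 0, and for |u|, |v| <= r this gives, with E = H - id,
     |F u - F v| >= (1 - 2 L1 r) |u - v| - |E u - E v|.
   In part (1), Schwarz's lemma applied to L2 (H' - 1) / (L2^2 - H') bounds |H' z - 1| by
   (L2^2 - 1) |z| / (L2 - |z|), so E is Lipschitz on the disc of radius r with that constant, and
   the resulting factor is positive exactly for r < rho1. In part (2), H is the identity, by
   Schwarz's lemma or by the maximum principle for H'. Integrating the same bounds along rays
   gives |F z| >= sigma(|z|) with sigma increasing on [0, rho]; by invariance of domain and
   connectedness, univalence together with this radial bound yields the covering of the disc of
   radius sigma(rho). The extremal functions are real on the real axis, where they stop being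
   monotone right after rho1 (resp. fold at -rho2); for F1 the estimate stays strict up to the
   boundary point rho1, so its value sigma1 is not attained inside. *)

section \<open>Derivative bounds and covering via invariance of domain\<close>

definition biharmonic_map :: "(complex \<Rightarrow> complex) \<Rightarrow> (complex \<Rightarrow> complex) \<Rightarrow> complex \<Rightarrow> complex" where
  "biharmonic_map G H z = complex_of_real ((cmod z)\<^sup>2) * G z + H z"

definition pick_bound :: "real \<Rightarrow> real \<Rightarrow> real" where
  "pick_bound L t = (L\<^sup>2 - 1) * t / (L - t)"

lemma holomorphic_norm_diff_le:
  fixes f :: "complex \<Rightarrow> complex"
  assumes "f holomorphic_on S" "open S" "convex T" "T \<subseteq> S"
    and "\<And>z. z \<in> T \<Longrightarrow> cmod (deriv f z) \<le> B" and "u \<in> T" "v \<in> T"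
  shows "cmod (f u - f v) \<le> B * cmod (u - v)"
proof (rule field_differentiable_bound[where S=T and f'="deriv f"])
  show "(f has_field_derivative deriv f z) (at z within T)" if "z \<in> T" for z
    using holomorphic_derivI[OF assms(1,2)] that assms(4) by blast
qed (use assms in auto)

lemma inj_on_ball_if_inj_on_cballs:
  fixes f :: "'a::real_normed_vector \<Rightarrow> 'b"
  assumes "\<And>r. 0 \<le> r \<Longrightarrow> r < \<rho> \<Longrightarrow> inj_on f (cball 0 r)"
  shows "inj_on f (ball 0 \<rho>)"
proof (rule inj_onI)
  fix u v assume "u \<in> ball 0 \<rho>" "v \<in> ball 0 \<rho>" "f u = f v"
  then show "u = v"
    using assms[of "max (norm u) (norm v)"] by (auto simp: inj_on_def max_def)
qed

lemma norm_minus_one_le_pick_bound: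
  fixes d :: "complex \<Rightarrow> complex"
  assumes L: "L > 1" and hol: "d holomorphic_on ball 0 1" and d0: "d 0 = 1"
    and bd: "\<And>w. cmod w < 1 \<Longrightarrow> cmod (d w) < L" and z: "cmod z < 1"
  shows "cmod (d z - 1) \<le> pick_bound L (cmod z)"
proof -
  have "L < L\<^sup>2" using L by (simp add: power2_eq_square)
  have nz: "of_real (L\<^sup>2) - d w \<noteq> 0" if "cmod w < 1" for w
  proof
    assume "of_real (L\<^sup>2) - d w = 0"
    then have "cmod (d w) = L\<^sup>2" by (metis right_minus_eq norm_of_real abs_power2)
    with bd[OF that] \<open>L < L\<^sup>2\<close> show False by simp
  qed
  \<comment> \<open>w \<mapsto> L (w - 1) / (L^2 - w) maps the disc of radius L onto the unit disc and 1 to 0\<close>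
  define \<phi> where "\<phi> w = of_real L * (d w - 1) / (of_real (L\<^sup>2) - d w)" for w
  have "\<phi> holomorphic_on ball 0 1"
    unfolding \<phi>_def using hol nz by (auto intro!: holomorphic_intros)
  moreover have "\<phi> 0 = 0" unfolding \<phi>_def using d0 by simp
  moreover have "cmod (\<phi> w) < 1" if w: "cmod w < 1" for w
  proof -
    have norm_sq: "(cmod (d w))\<^sup>2 = (Re (d w))\<^sup>2 + (Im (d w))\<^sup>2" by (simp add: cmod_power2)
    have "(cmod (d w))\<^sup>2 < L\<^sup>2" using bd[OF w] by (simp add: power_strict_mono)
    then have "(L\<^sup>2 - 1) * ((Re (d w))\<^sup>2 + (Im (d w))\<^sup>2) < (L\<^sup>2 - 1) * L\<^sup>2"
      using norm_sq L by (intro mult_strict_left_mono) (auto simp: power2_eq_square less_1_mult)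
    then have "L\<^sup>2 * ((Re (d w) - 1)\<^sup>2 + (Im (d w))\<^sup>2) < (L\<^sup>2 - Re (d w))\<^sup>2 + (Im (d w))\<^sup>2"
      by (simp add: power2_eq_square algebra_simps)
    then have "(cmod (of_real L * (d w - 1)))\<^sup>2 < (cmod (of_real (L\<^sup>2) - d w))\<^sup>2"
      by (simp add: cmod_power2 norm_mult power_mult_distrib)
    then have "cmod (of_real L * (d w - 1)) < cmod (of_real (L\<^sup>2) - d w)"
      by (meson norm_ge_zero power2_less_imp_less)
    then show ?thesis unfolding \<phi>_def using nz[OF w] by (simp add: norm_divide divide_less_eq)
  qed
  ultimately have schwarz: "cmod (\<phi> z) \<le> cmod z"
    using Schwarz_Lemma(1) z by blast
  have "(d z - 1) * (of_real L + \<phi> z) = \<phi> z * of_real (L\<^sup>2 - 1)"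
    unfolding \<phi>_def using nz[OF z] by (simp add: field_simps)
  then have eq: "cmod (d z - 1) * cmod (of_real L + \<phi> z) = cmod (\<phi> z) * (L\<^sup>2 - 1)"
    using \<open>L < L\<^sup>2\<close> by (metis norm_mult norm_of_real abs_of_pos diff_gt_0_iff_gt L less_trans)
  have den: "L - cmod z \<le> cmod (of_real L + \<phi> z)"
    using norm_diff_ineq[of "of_real L :: complex" "\<phi> z"] schwarz L by simp
  have "cmod (d z - 1) * (L - cmod z) \<le> cmod z * (L\<^sup>2 - 1)"
  proof -
    have "cmod (d z - 1) * (L - cmod z) \<le> cmod (\<phi> z) * (L\<^sup>2 - 1)"
      using mult_left_mono[OF den, of "cmod (d z - 1)"] eq by simp
    also have "\<dots> \<le> cmod z * (L\<^sup>2 - 1)"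
      using schwarz \<open>L < L\<^sup>2\<close> L by (intro mult_right_mono) auto
    finally show ?thesis .
  qed
  then show ?thesis
    unfolding pick_bound_def using z L by (simp add: pos_le_divide_eq mult.commute)
qed

lemma pick_bound_less:
  assumes "L > 1" "0 \<le> s" "s < t" "t < L"
  shows "pick_bound L s < pick_bound L t"
proof -
  have "s * (L - t) < t * (L - s)" using assms by (simp add: algebra_simps)
  moreover have "L\<^sup>2 - 1 > 0" using assms by (simp add: power2_eq_square less_1_mult)
  ultimately have "(L\<^sup>2 - 1) * (s * (L - t)) < (L\<^sup>2 - 1) * (t * (L - s))" by simp
  then show ?thesis unfolding pick_bound_def using assms by (simp add: divide_simps algebra_simps)
qed

lemma pick_bound_le:
  assumes "L > 1" "0 \<le> s" "s \<le> t" "t < L"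
  shows "pick_bound L s \<le> pick_bound L t"
  using pick_bound_less[OF assms(1,2) _ assms(4)] assms(3) by (cases "s = t") auto

lemma ball_subset_image_if_radial_lower_bound:
  fixes F :: "'a \<Rightarrow> 'a::euclidean_space" and \<sigma> :: "real \<Rightarrow> real"
  assumes \<rho>: "0 < \<rho>" and contF: "continuous_on (ball 0 \<rho>) F" and inj: "inj_on F (ball 0 \<rho>)"
    and F0: "F 0 = 0" and cont\<sigma>: "continuous_on {0..\<rho>} \<sigma>" and mono\<sigma>: "mono_on {0..\<rho>} \<sigma>"
    and lower: "\<And>z. norm z < \<rho> \<Longrightarrow> \<sigma> (norm z) \<le> norm (F z)"
  shows "ball 0 (\<sigma> \<rho>) \<subseteq> F ` ball 0 \<rho>"
proof
  fix w :: 'a assume "w \<in> ball 0 (\<sigma> \<rho>)"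
  then have "norm w < \<sigma> \<rho>" by simp
  moreover have "(\<sigma> \<longlongrightarrow> \<sigma> \<rho>) (at_left \<rho>)"
    using continuous_on_Icc_at_leftD[OF cont\<sigma> \<rho>] .
  ultimately have "eventually (\<lambda>r. norm w < \<sigma> r) (at_left \<rho>)"
    by (simp add: order_tendstoD(1))
  moreover have "eventually (\<lambda>r. r \<in> {0<..<\<rho>}) (at_left \<rho>)"
    using eventually_at_left_real[OF \<rho>] .
  ultimately have "eventually (\<lambda>r. norm w < \<sigma> r \<and> r \<in> {0<..<\<rho>}) (at_left \<rho>)"
    by (rule eventually_conj)
  then have "\<exists>r. norm w < \<sigma> r \<and> r \<in> {0<..<\<rho>}"
    by (rule eventually_happens'[OF trivial_limit_at_left_real])
  then obtain r where r: "0 < r" "r < \<rho>" "norm w < \<sigma> r" by auto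
  \<comment> \<open>Inside the ball of radius \<sigma> r, the open set F(ball 0 \<rho>) agrees with the closed set F(cball 0 r)\<close>
  define T where "T = ball (0::'a) (\<sigma> r)"
  define V where "V = F ` ball 0 \<rho>"
  define C where "C = F ` cball 0 r"
  have cball_sub: "cball (0::'a) r \<subseteq> ball 0 \<rho>" using r by auto
  have "open V"
    unfolding V_def by (rule invariance_of_domain[OF contF open_ball inj])
  moreover have "closed C"
    unfolding C_def using cball_sub
    by (intro compact_imp_closed compact_continuous_image continuous_on_subset[OF contF]) auto
  moreover have "T \<inter> V = T \<inter> C"
  proof
    show "T \<inter> C \<subseteq> T \<inter> V" unfolding C_def V_def using cball_sub by auto
    show "T \<inter> V \<subseteq> T \<inter> C"
    proof
      fix u assume u: "u \<in> T \<inter> V"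
      then obtain z where z: "norm z < \<rho>" "u = F z" unfolding V_def by auto
      have "norm z \<le> r"
      proof (rule ccontr)
        assume "\<not> norm z \<le> r"
        then have "\<sigma> r \<le> \<sigma> (norm z)" using mono_onD[OF mono\<sigma>] r z by auto
        with lower[OF z(1)] u z show False unfolding T_def by simp
      qed
      with u z show "u \<in> T \<inter> C" unfolding C_def by auto
    qed
  qed
  moreover have "0 \<in> T \<inter> V"
    using r F0 \<rho> norm_ge_zero[of w] unfolding T_def V_def
    by (auto intro!: image_eqI[of _ _ 0] simp del: norm_ge_zero)
  ultimately have "T \<inter> V = T"
    using connected_clopen[of T] closedin_closed_Int[of C T]
    unfolding T_def by (metis connected_ball openin_open_Int empty_iff)
  moreover have "w \<in> T" unfolding T_def using r by simp
  ultimately show "w \<in> F ` ball 0 \<rho>" unfolding V_def by blast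
qed

section \<open>Distortion estimates for biharmonic maps\<close>

lemma norm_diff_mult_id_le:
  fixes G :: "complex \<Rightarrow> complex"
  assumes holG: "G holomorphic_on ball 0 1" and bdG: "\<forall>z\<in>ball 0 1. cmod (G z + z * deriv G z) \<le> L1"
    and "u \<in> ball 0 1" "v \<in> ball 0 1"
  shows "cmod (u * G u - v * G v) \<le> L1 * cmod (u - v)"
proof (rule holomorphic_norm_diff_le[where S="ball 0 1"])
  show "(\<lambda>z. z * G z) holomorphic_on ball 0 1" using holG by (auto intro!: holomorphic_intros)
  fix z :: complex assume z: "z \<in> ball 0 1"
  then have "G field_differentiable at z"
    using holG holomorphic_on_imp_differentiable_at by blast
  then show "cmod (deriv (\<lambda>z. z * G z) z) \<le> L1"
    using bdG z by (simp add: add.commute)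
qed (use assms in auto)

lemma norm_diff_minus_id_le:
  fixes H :: "complex \<Rightarrow> complex"
  assumes L2: "L2 > 1" and holH: "H holomorphic_on ball 0 1" and d0: "deriv H 0 = 1"
    and bdH: "\<forall>z\<in>ball 0 1. cmod (deriv H z) < L2"
    and r: "r < 1" and uv: "cmod u \<le> r" "cmod v \<le> r"
  shows "cmod ((H u - u) - (H v - v)) \<le> pick_bound L2 r * cmod (u - v)"
proof (rule holomorphic_norm_diff_le[where S="ball 0 1" and T="cball 0 r"])
  show "(\<lambda>z. H z - z) holomorphic_on ball 0 1" using holH by (auto intro!: holomorphic_intros)
  fix z :: complex assume z: "z \<in> cball 0 r"
  then have z1: "cmod z < 1" using r by simp
  then have "H field_differentiable at z"
    using holH holomorphic_on_imp_differentiable_at by simp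
  then have "deriv (\<lambda>z. H z - z) z = deriv H z - 1" by simp
  also have "cmod \<dots> \<le> pick_bound L2 (cmod z)"
    using norm_minus_one_le_pick_bound[OF L2 holomorphic_deriv[OF holH open_ball] d0] bdH z1 by simp
  also have "\<dots> \<le> pick_bound L2 r"
    using pick_bound_le[OF L2] z r L2 by simp
  finally show "cmod (deriv (\<lambda>z. H z - z) z) \<le> pick_bound L2 r" .
qed (use assms in auto)

lemma norm_diff_minus_id_less:
  fixes H :: "complex \<Rightarrow> complex"
  assumes L2: "L2 > 1" and holH: "H holomorphic_on ball 0 1" and d0: "deriv H 0 = 1"
    and bdH: "\<forall>z\<in>ball 0 1. cmod (deriv H z) < L2"
    and r: "r < 1" and z: "cmod z < r" and w: "cmod w \<le> r" and "z \<noteq> w"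
  shows "cmod ((H z - z) - (H w - w)) < pick_bound L2 r * cmod (z - w)"
proof -
  \<comment> \<open>near z the Lipschitz constant is strictly smaller, so split the segment at its midpoint\<close>
  define m where "m = (z + w) / 2"
  define E where "E u = H u - u" for u
  have "cmod m \<le> (cmod z + cmod w) / 2"
    unfolding m_def using norm_triangle_ineq[of z w] by (simp add: norm_divide)
  then have m: "cmod m < r" using z w by simp
  have zm: "cmod (z - m) = cmod (z - w) / 2" and mw: "cmod (m - w) = cmod (z - w) / 2"
    unfolding m_def by (simp_all add: field_simps norm_divide flip: norm_minus_commute)
  define r' where "r' = max (cmod z) (cmod m)"
  have r': "0 \<le> r'" "r' < r" "cmod z \<le> r'" "cmod m \<le> r'" using z m unfolding r'_def by (auto simp: le_max_iff_disj)
  have "cmod (E z - E w) \<le> cmod (E z - E m) + cmod (E m - E w)"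
    using norm_triangle_ineq[of "E z - E m" "E m - E w"] by simp
  also have "\<dots> \<le> pick_bound L2 r' * cmod (z - m) + pick_bound L2 r * cmod (m - w)"
    unfolding E_def using norm_diff_minus_id_le[OF L2 holH d0 bdH] r' r m w
    by (intro add_mono) auto
  also have "\<dots> < pick_bound L2 r * cmod (z - m) + pick_bound L2 r * cmod (m - w)"
  proof -
    have "pick_bound L2 r' < pick_bound L2 r" using pick_bound_less[OF L2 r'(1,2)] r L2 by simp
    moreover have "0 < cmod (z - m)" unfolding zm using \<open>z \<noteq> w\<close> by simp
    ultimately show ?thesis by simp
  qed
  also have "\<dots> = pick_bound L2 r * cmod (z - w)" unfolding zm mw by (simp add: field_simps)
  finally show ?thesis unfolding E_def .
qed

lemma norm_diff_biharmonic_map_ge: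
  fixes G H :: "complex \<Rightarrow> complex"
  assumes L1: "L1 \<ge> 0" and holG: "G holomorphic_on ball 0 1"
    and bdG: "\<forall>z\<in>ball 0 1. cmod (G z + z * deriv G z) \<le> L1"
    and r: "r < 1" and uv: "cmod u \<le> r" "cmod v \<le> r"
  shows "(1 - 2 * L1 * r) * cmod (u - v) - cmod ((H u - u) - (H v - v))
           \<le> cmod (biharmonic_map G H u - biharmonic_map G H v)"
proof -
  define K where "K z = z * G z" for z
  have "u \<in> ball 0 1" "v \<in> ball 0 1" "0 \<in> ball (0::complex) 1" using uv r by auto
  have r0: "0 \<le> r" using uv(1) norm_ge_zero order_trans by blast
  note lip = norm_diff_mult_id_le[OF holG bdG, folded K_def]
  have Ku: "cmod (K u) \<le> L1 * r"
    using lip[OF \<open>u \<in> ball 0 1\<close> \<open>0 \<in> ball 0 1\<close>] mult_left_mono[OF uv(1) L1] by (simp add: K_def)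
  define D where "D = biharmonic_map G H u - biharmonic_map G H v"
  define E where "E = (H u - u) - (H v - v)"
  define C where "C = (cnj u - cnj v) * K u + cnj v * (K u - K v)"
  have "biharmonic_map G H z = cnj z * K z + H z" for z
    unfolding biharmonic_map_def K_def by (simp only: complex_norm_square mult_ac)
  then have "u - v = D - E - C"
    unfolding D_def E_def C_def by (simp add: algebra_simps)
  then have "cmod (u - v) \<le> cmod D + cmod E + cmod C"
    using norm_triangle_ineq4[of "D - E" C] norm_triangle_ineq4[of D E] by simp
  moreover have "cmod C \<le> cmod (u - v) * cmod (K u) + cmod v * cmod (K u - K v)"
    using norm_triangle_ineq[of "(cnj u - cnj v) * K u" "cnj v * (K u - K v)"]
    unfolding C_def by (simp add: norm_mult flip: complex_cnj_diff)
  moreover have "cmod (u - v) * cmod (K u) + cmod v * cmod (K u - K v)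
                   \<le> cmod (u - v) * (L1 * r) + r * (L1 * cmod (u - v))"
    using lip[OF \<open>u \<in> ball 0 1\<close> \<open>v \<in> ball 0 1\<close>] Ku uv r0 by (intro add_mono mult_mono) auto
  ultimately show ?thesis unfolding D_def E_def by (simp add: algebra_simps)
qed

lemma inj_on_cball_biharmonic_map:
  fixes G H :: "complex \<Rightarrow> complex"
  assumes L1: "L1 \<ge> 0" and holG: "G holomorphic_on ball 0 1"
    and bdG: "\<forall>z\<in>ball 0 1. cmod (G z + z * deriv G z) \<le> L1" and r: "r < 1"
    and E: "\<And>u v. u \<in> cball 0 r \<Longrightarrow> v \<in> cball 0 r \<Longrightarrow> cmod ((H u - u) - (H v - v)) \<le> c * cmod (u - v)"
    and c: "c + 2 * L1 * r < 1"
  shows "inj_on (biharmonic_map G H) (cball 0 r)"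
proof (rule inj_onI, rule ccontr)
  fix u v assume u: "u \<in> cball 0 r" and v: "v \<in> cball 0 r"
    and eq: "biharmonic_map G H u = biharmonic_map G H v" and "u \<noteq> v"
  then have "0 < (1 - 2 * L1 * r - c) * cmod (u - v)" using c by simp
  also have "\<dots> \<le> (1 - 2 * L1 * r) * cmod (u - v) - cmod ((H u - u) - (H v - v))"
    using E[OF u v] by (simp add: algebra_simps)
  also have "\<dots> \<le> 0"
    using norm_diff_biharmonic_map_ge[OF L1 holG bdG r, of u v H] u v eq by simp
  finally show False by simp
qed

lemma norm_biharmonic_map_ge:
  fixes G H :: "complex \<Rightarrow> complex"
  assumes holG: "G holomorphic_on ball 0 1" and bdG: "\<forall>z\<in>ball 0 1. cmod (G z + z * deriv G z) \<le> L1"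
    and z: "cmod z < 1"
  shows "cmod (H z) - L1 * (cmod z)\<^sup>2 \<le> cmod (biharmonic_map G H z)"
proof -
  have "cmod (z * G z) \<le> L1 * cmod z"
    using norm_diff_mult_id_le[OF holG bdG, of z 0] z by simp
  then have "cmod (complex_of_real ((cmod z)\<^sup>2) * G z) \<le> L1 * (cmod z)\<^sup>2"
    using mult_left_mono[of "cmod (z * G z)" "L1 * cmod z" "cmod z"]
    by (simp add: norm_mult power2_eq_square algebra_simps)
  moreover have "cmod (H z) \<le> cmod (complex_of_real ((cmod z)\<^sup>2) * G z + H z) + cmod (complex_of_real ((cmod z)\<^sup>2) * G z)"
    using norm_triangle_ineq4[of "complex_of_real ((cmod z)\<^sup>2) * G z + H z" "complex_of_real ((cmod z)\<^sup>2) * G z"]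
    by simp
  ultimately show ?thesis unfolding biharmonic_map_def by simp
qed

lemma continuous_on_biharmonic_map:
  assumes "G holomorphic_on ball 0 1" "H holomorphic_on ball 0 1"
  shows "continuous_on (ball 0 1) (biharmonic_map G H)"
  unfolding biharmonic_map_def[abs_def]
  using holomorphic_on_imp_continuous_on[OF assms(1)] holomorphic_on_imp_continuous_on[OF assms(2)]
  by (intro continuous_intros) auto

section \<open>The radius rho1 and the function sigma1\<close>

definition rho1_poly :: "real \<Rightarrow> real \<Rightarrow> real \<Rightarrow> real" where
  "rho1_poly L1 L2 t = 2 * L1 * t\<^sup>2 - L2 * (2 * L1 + L2) * t + L2"

lemma one_minus_pick_bound_eq:
  assumes "t < L2"
  shows "1 - pick_bound L2 t - 2 * L1 * t = rho1_poly L1 L2 t / (L2 - t)"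
  using assms unfolding pick_bound_def rho1_poly_def by (simp add: field_simps power2_eq_square)

lemma rho1_root:
  assumes L1: "L1 \<ge> 0" and L2: "L2 > 1"
  shows "0 < rho1 L1 L2" "rho1 L1 L2 < 1" "rho1_poly L1 L2 (rho1 L1 L2) = 0"
    and "4 * L1 * rho1 L1 L2 < L2 * (2 * L1 + L2)"
proof -
  define b where "b = L2 * (2 * L1 + L2)"
  define S where "S = sqrt (L2\<^sup>2 * (2 * L1 + L2)\<^sup>2 - 8 * L1 * L2)"
  define \<rho> where "\<rho> = rho1 L1 L2"
  have "L2 * L2 \<le> b" unfolding b_def using L1 L2 by (intro mult_left_mono) auto
  then have b: "b > 1" using L2 less_1_mult[of L2 L2] by simp
  have disc: "b\<^sup>2 - 8 * L1 * L2 = L2\<^sup>2 * (2 * L1 - L2)\<^sup>2 + 8 * L1 * L2 * (L2\<^sup>2 - 1)"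
    unfolding b_def by (simp add: power2_eq_square algebra_simps)
  have "b\<^sup>2 - 8 * L1 * L2 > 0"
  proof (cases "L1 = 0")
    case True then show ?thesis unfolding b_def using L2 by simp
  next
    case False
    then have "8 * L1 * L2 * (L2\<^sup>2 - 1) > 0"
      using L1 L2 by (simp add: power2_eq_square less_1_mult)
    then show ?thesis unfolding disc by (simp add: add_nonneg_pos)
  qed
  moreover have "b\<^sup>2 = L2\<^sup>2 * (2 * L1 + L2)\<^sup>2" unfolding b_def by (simp add: power_mult_distrib)
  ultimately have S: "S > 0" "S\<^sup>2 = b\<^sup>2 - 8 * L1 * L2" unfolding S_def by simp_all
  have \<rho>_eq: "\<rho> * (b + S) = 2 * L2"
    unfolding \<rho>_def rho1_def b_def[symmetric] S_def[symmetric] using b S by (simp add: add_pos_pos)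
  have "4 * L1 * \<rho> * (b + S) = 4 * L1 * (\<rho> * (b + S))" by (simp only: mult.assoc)
  also have "\<dots> = (b - S) * (b + S)" using \<rho>_eq S(2) by (simp add: power2_eq_square algebra_simps)
  finally have "4 * L1 * \<rho> * (b + S) = (b - S) * (b + S)" .
  then have four: "4 * L1 * \<rho> = b - S" using b S by simp
  have "0 < \<rho> * (b + S)" using \<rho>_eq L2 by simp
  then show "0 < rho1 L1 L2" using b S unfolding \<rho>_def by (simp add: zero_less_mult_iff)
  show "4 * L1 * rho1 L1 L2 < L2 * (2 * L1 + L2)" using four S b_def \<rho>_def by simp
  have "rho1_poly L1 L2 \<rho> = \<rho> * (4 * L1 * \<rho>) / 2 - \<rho> * b + L2"
    unfolding rho1_poly_def b_def by (simp add: power2_eq_square)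
  also have "\<dots> = L2 - \<rho> * (b + S) / 2" unfolding four by (simp add: field_simps)
  finally show "rho1_poly L1 L2 (rho1 L1 L2) = 0" using \<rho>_eq \<rho>_def by simp
  have "S\<^sup>2 - (2 * L2 - b)\<^sup>2 = 4 * L2 * (L2 - 1) * (2 * L1 + L2)"
    unfolding S(2) b_def by (simp add: power2_eq_square algebra_simps)
  moreover have "0 < 4 * L2 * (L2 - 1) * (2 * L1 + L2)" using L1 L2 by simp
  ultimately have "(2 * L2 - b)\<^sup>2 < S\<^sup>2" by linarith
  then have "2 * L2 - b < S" using S(1) by (simp add: power2_less_imp_less)
  then have "\<rho> * (b + S) < 1 * (b + S)" unfolding \<rho>_eq by simp
  then have "\<rho> < 1" by (rule mult_right_less_imp_less) (use b S in linarith)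
  then show "rho1 L1 L2 < 1" unfolding \<rho>_def .
qed

lemma rho1_poly_factor:
  assumes "L1 \<ge> 0" "L2 > 1"
  shows "rho1_poly L1 L2 t
           = (t - rho1 L1 L2) * (2 * L1 * (t + rho1 L1 L2) - L2 * (2 * L1 + L2))"
proof -
  have "rho1_poly L1 L2 t = rho1_poly L1 L2 t - rho1_poly L1 L2 (rho1 L1 L2)"
    using rho1_root(3)[OF assms] by simp
  then show ?thesis unfolding rho1_poly_def by (simp add: power2_eq_square algebra_simps)
qed

lemma rho1_poly_pos:
  assumes L1: "L1 \<ge> 0" and L2: "L2 > 1" and t: "0 \<le> t" "t < rho1 L1 L2"
  shows "rho1_poly L1 L2 t > 0"
proof -
  have "2 * L1 * (t + rho1 L1 L2) \<le> 4 * L1 * rho1 L1 L2"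
    using L1 t mult_left_mono[of "t + rho1 L1 L2" "2 * rho1 L1 L2" L1] by simp
  then have "2 * L1 * (t + rho1 L1 L2) - L2 * (2 * L1 + L2) < 0"
    using rho1_root(4)[OF L1 L2] by simp
  with t show ?thesis unfolding rho1_poly_factor[OF L1 L2] by (simp add: mult_neg_neg)
qed

lemma rho1_poly_neg_right:
  assumes L1: "L1 \<ge> 0" and L2: "L2 > 1"
  obtains \<delta> where "\<delta> > 0" "\<And>t. rho1 L1 L2 < t \<Longrightarrow> t < rho1 L1 L2 + \<delta> \<Longrightarrow> rho1_poly L1 L2 t < 0"
proof
  define \<rho> where "\<rho> = rho1 L1 L2"
  define \<delta> where "\<delta> = (L2 * (2 * L1 + L2) - 4 * L1 * \<rho>) / (2 * L1 + 1)"
  show "\<delta> > 0" unfolding \<delta>_def \<rho>_def using rho1_root(4)[OF L1 L2] L1 by simp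
  fix t assume t: "rho1 L1 L2 < t" "t < rho1 L1 L2 + \<delta>"
  have "2 * L1 * (t - \<rho>) \<le> (2 * L1 + 1) * (t - \<rho>)" using t \<rho>_def by simp
  also have "\<dots> < (2 * L1 + 1) * \<delta>"
    using t L1 \<rho>_def by (intro mult_strict_left_mono) auto
  also have "\<dots> = L2 * (2 * L1 + L2) - 4 * L1 * \<rho>"
    unfolding \<delta>_def using L1 by simp
  finally have "2 * L1 * (t + \<rho>) - L2 * (2 * L1 + L2) < 0" by (simp add: algebra_simps)
  with t show "rho1_poly L1 L2 t < 0"
    unfolding rho1_poly_factor[OF L1 L2] \<rho>_def by (simp add: mult_pos_neg)
qed

(* pick_growth L t is the integral of 1 - pick_bound L over [0, t]. *)
definition pick_growth :: "real \<Rightarrow> real \<Rightarrow> real" where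
  "pick_growth L t = L\<^sup>2 * t + (L ^ 3 - L) * ln (1 - t / L)"

definition sigma1_fun :: "real \<Rightarrow> real \<Rightarrow> real \<Rightarrow> real" where
  "sigma1_fun L1 L2 t = pick_growth L2 t - L1 * t\<^sup>2"

lemma sigma1_eq: "sigma1 L1 L2 = sigma1_fun L1 L2 (rho1 L1 L2)"
  unfolding sigma1_def sigma1_fun_def pick_growth_def by simp

lemma sigma1_fun_0 [simp]: "sigma1_fun L1 L2 0 = 0"
  unfolding sigma1_fun_def pick_growth_def by simp

lemma pick_growth_deriv:
  assumes L: "L > 1" and t: "t < L"
  shows "(pick_growth L has_real_derivative 1 - pick_bound L t) (at t)"
proof -
  have "1 - t / L > 0" using L t by (simp add: field_simps)
  then have "(pick_growth L has_real_derivative L\<^sup>2 + (L ^ 3 - L) * (- (1 / L) / (1 - t / L))) (at t)"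
    unfolding pick_growth_def[abs_def] using L by (auto intro!: derivative_eq_intros)
  moreover have "L\<^sup>2 + (L ^ 3 - L) * (- (1 / L) / (1 - t / L)) = 1 - pick_bound L t"
    unfolding pick_bound_def using L t by (simp add: field_simps power2_eq_square power3_eq_cube)
  ultimately show ?thesis by simp
qed

lemma sigma1_fun_deriv:
  assumes L2: "L2 > 1" and t: "t < L2"
  shows "(sigma1_fun L1 L2 has_real_derivative rho1_poly L1 L2 t / (L2 - t)) (at t)"
proof -
  have eq: "(1 - pick_bound L2 t) - L1 * (2 * t) = rho1_poly L1 L2 t / (L2 - t)"
    using one_minus_pick_bound_eq[OF t, of L1] by linarith
  have "(sigma1_fun L1 L2 has_real_derivative (1 - pick_bound L2 t) - L1 * (2 * t)) (at t)"
    unfolding sigma1_fun_def[abs_def]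
    by (rule derivative_eq_intros pick_growth_deriv[OF L2 t] refl | simp)+
  then show ?thesis unfolding eq .
qed

lemma continuous_on_sigma1_fun:
  assumes "L2 > 1" "b < L2"
  shows "continuous_on {a..b} (sigma1_fun L1 L2)"
  using assms by (intro continuous_at_imp_continuous_on) (auto intro: DERIV_isCont[OF sigma1_fun_deriv])

lemma mono_on_sigma1_fun:
  assumes L1: "L1 \<ge> 0" and L2: "L2 > 1"
  shows "mono_on {0..rho1 L1 L2} (sigma1_fun L1 L2)"
proof (rule mono_onI)
  fix x y assume xy: "x \<in> {0..rho1 L1 L2}" "y \<in> {0..rho1 L1 L2}" "x \<le> y"
  have \<rho>: "rho1 L1 L2 < L2" using rho1_root(2)[OF L1 L2] L2 by simp
  show "sigma1_fun L1 L2 x \<le> sigma1_fun L1 L2 y"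
  proof (rule DERIV_nonneg_imp_increasing_open[OF xy(3)])
    fix t assume t: "x < t" "t < y"
    then have "rho1_poly L1 L2 t / (L2 - t) \<ge> 0"
      using rho1_poly_pos[OF L1 L2, of t] xy \<rho> by simp
    then show "\<exists>d. (sigma1_fun L1 L2 has_real_derivative d) (at t) \<and> 0 \<le> d"
      using sigma1_fun_deriv[OF L2, of t] t xy \<rho> by auto
  qed (use continuous_on_sigma1_fun[OF L2] xy \<rho> in auto)
qed

lemma sigma1_fun_MVT:
  assumes L2: "L2 > 1" and "a < b" "b < L2"
  obtains \<xi> where "a < \<xi>" "\<xi> < b"
    "sigma1_fun L1 L2 b - sigma1_fun L1 L2 a = (b - a) * (rho1_poly L1 L2 \<xi> / (L2 - \<xi>))"
proof -
  have "\<exists>\<xi>. a < \<xi> \<and> \<xi> < b \<and>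
          sigma1_fun L1 L2 b - sigma1_fun L1 L2 a = (b - a) * (rho1_poly L1 L2 \<xi> / (L2 - \<xi>))"
    by (rule MVT2[OF \<open>a < b\<close>, where f' = "\<lambda>t. rho1_poly L1 L2 t / (L2 - t)"])
       (use sigma1_fun_deriv[OF L2] assms in auto)
  with that show ?thesis by blast
qed

lemma sigma1_pos:
  assumes L1: "L1 \<ge> 0" and L2: "L2 > 1"
  shows "sigma1 L1 L2 > 0"
proof -
  note \<rho> = rho1_root[OF L1 L2]
  obtain \<xi> where \<xi>: "0 < \<xi>" "\<xi> < rho1 L1 L2"
    and eq: "sigma1_fun L1 L2 (rho1 L1 L2) - sigma1_fun L1 L2 0 = (rho1 L1 L2 - 0) * (rho1_poly L1 L2 \<xi> / (L2 - \<xi>))"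
    by (rule sigma1_fun_MVT[OF L2 \<rho>(1)]) (use \<rho>(2) L2 in simp)
  have "rho1_poly L1 L2 \<xi> / (L2 - \<xi>) > 0"
    using rho1_poly_pos[OF L1 L2, of \<xi>] \<xi> \<rho> L2 by simp
  then have "0 < rho1 L1 L2 * (rho1_poly L1 L2 \<xi> / (L2 - \<xi>))"
    using \<rho>(1) by (rule mult_pos_pos[rotated])
  then show ?thesis using eq unfolding sigma1_eq by simp
qed

lemma sigma1_fun_less_right:
  assumes L1: "L1 \<ge> 0" and L2: "L2 > 1"
  obtains \<delta> where "\<delta> > 0"
    "\<And>x. rho1 L1 L2 < x \<Longrightarrow> x < rho1 L1 L2 + \<delta> \<Longrightarrow> sigma1_fun L1 L2 x < sigma1 L1 L2"
proof -
  define \<rho> where "\<rho> = rho1 L1 L2"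
  obtain \<delta> where \<delta>: "\<delta> > 0" "\<And>t. \<rho> < t \<Longrightarrow> t < \<rho> + \<delta> \<Longrightarrow> rho1_poly L1 L2 t < 0"
    using rho1_poly_neg_right[OF L1 L2] unfolding \<rho>_def by blast
  define \<delta>' where "\<delta>' = min \<delta> (L2 - \<rho>)"
  have "\<rho> < L2" using rho1_root(2)[OF L1 L2] L2 \<rho>_def by simp
  then have "\<delta>' > 0" using \<delta> unfolding \<delta>'_def by simp
  moreover have "sigma1_fun L1 L2 x < sigma1 L1 L2" if x: "\<rho> < x" "x < \<rho> + \<delta>'" for x
  proof -
    obtain \<xi> where \<xi>: "\<rho> < \<xi>" "\<xi> < x"
      and eq: "sigma1_fun L1 L2 x - sigma1_fun L1 L2 \<rho> = (x - \<rho>) * (rho1_poly L1 L2 \<xi> / (L2 - \<xi>))"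
      by (rule sigma1_fun_MVT[OF L2 x(1)]) (use x in \<open>simp add: \<delta>'_def\<close>)
    have "rho1_poly L1 L2 \<xi> / (L2 - \<xi>) < 0"
      using \<delta>(2)[of \<xi>] \<xi> x unfolding \<delta>'_def by (simp add: divide_neg_pos)
    then have "(x - \<rho>) * (rho1_poly L1 L2 \<xi> / (L2 - \<xi>)) < 0"
      by (intro mult_pos_neg) (use x in auto)
    then show ?thesis using eq unfolding sigma1_eq \<rho>_def[symmetric] by linarith
  qed
  ultimately show ?thesis using that unfolding \<rho>_def by blast
qed

section \<open>Part (1): univalence, covering and sharpness\<close>

lemma has_real_derivative_Re_along_ray:
  fixes H :: "complex \<Rightarrow> complex"
  assumes holH: "H holomorphic_on S" and S: "open S" and t: "of_real t * e \<in> S" and e: "cnj e * e = 1"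
  shows "((\<lambda>s. Re (cnj e * H (of_real s * e))) has_real_derivative Re (deriv H (of_real t * e))) (at t)"
proof -
  have "(H has_field_derivative deriv H (of_real t * e)) (at (of_real t * e))"
    using holomorphic_derivI[OF holH S t] .
  from DERIV_chain2[OF this DERIV_cmult_right[OF DERIV_ident, of e "of_real t"]]
  have "((\<lambda>w. cnj e * H (w * e)) has_field_derivative cnj e * (deriv H (of_real t * e) * e)) (at (of_real t))"
    by (intro DERIV_cmult) simp
  moreover have "cnj e * (deriv H (of_real t * e) * e) = deriv H (of_real t * e)"
    using e by (simp add: algebra_simps)
  ultimately have "((\<lambda>w. cnj e * H (w * e)) has_field_derivative deriv H (of_real t * e)) (at (of_real t))"
    by simp
  then show ?thesis by (rule has_field_derivative_Re[OF has_vector_derivative_real_field])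
qed

lemma norm_ge_pick_growth:
  fixes H :: "complex \<Rightarrow> complex"
  assumes L2: "L2 > 1" and holH: "H holomorphic_on ball 0 1" and H0: "H 0 = 0" and d0: "deriv H 0 = 1"
    and bdH: "\<forall>z\<in>ball 0 1. cmod (deriv H z) < L2" and z: "cmod z < 1"
  shows "pick_growth L2 (cmod z) \<le> cmod (H z)"
proof (cases "z = 0")
  case True then show ?thesis using H0 unfolding pick_growth_def by simp
next
  case False
  define e where "e = z / of_real (cmod z)"
  have ne: "cmod e = 1" unfolding e_def using False by (simp add: norm_divide)
  then have e: "cnj e * e = 1" using complex_norm_square[of e] by (simp add: mult.commute)
  have z_eq: "of_real (cmod z) * e = z" unfolding e_def using False by simp
  define f where "f t = Re (cnj e * H (of_real t * e)) - pick_growth L2 t" for t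
  have ray: "of_real t * e \<in> ball 0 1" if "0 \<le> t" "t \<le> cmod z" for t
    using that z ne by (simp add: norm_mult)
  have der: "(f has_real_derivative Re (deriv H (of_real t * e)) - (1 - pick_bound L2 t)) (at t)"
    if "0 \<le> t" "t \<le> cmod z" for t
    unfolding f_def[abs_def] using that z L2
    by (intro DERIV_diff has_real_derivative_Re_along_ray[OF holH open_ball ray e] pick_growth_deriv) auto
  \<comment> \<open>Re H' \<ge> 1 - |H' - 1|, so f is nondecreasing along the ray\<close>
  have "f 0 \<le> f (cmod z)"
  proof (rule DERIV_nonneg_imp_increasing_open[of 0 "cmod z"])
    fix t assume t: "0 < t" "t < cmod z"
    have "cmod (deriv H (of_real t * e) - 1) \<le> pick_bound L2 t"
      using norm_minus_one_le_pick_bound[OF L2 holomorphic_deriv[OF holH open_ball] d0, of "of_real t * e"]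
        bdH ray[of t] t ne by (simp add: norm_mult)
    moreover have "1 - cmod (deriv H (of_real t * e) - 1) \<le> Re (deriv H (of_real t * e))"
      using complex_Re_le_cmod[of "1 - deriv H (of_real t * e)"] by (simp add: norm_minus_commute)
    ultimately show "\<exists>y. (f has_real_derivative y) (at t) \<and> 0 \<le> y"
      using der[of t] t by force
  qed (auto intro!: continuous_at_imp_continuous_on DERIV_isCont[OF der])
  moreover have "f 0 = 0" unfolding f_def pick_growth_def using H0 by simp
  ultimately have "pick_growth L2 (cmod z) \<le> Re (cnj e * H z)" unfolding f_def z_eq by simp
  also have "\<dots> \<le> cmod (H z)"
    using complex_Re_le_cmod[of "cnj e * H z"] ne by (simp add: norm_mult)
  finally show ?thesis .
qed

lemma biharmonic_map_inj_on_rho1: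
  fixes G H :: "complex \<Rightarrow> complex"
  assumes L1: "L1 \<ge> 0" and L2: "L2 > 1"
    and holG: "G holomorphic_on ball 0 1" and bdG: "\<forall>z\<in>ball 0 1. cmod (G z + z * deriv G z) \<le> L1"
    and holH: "H holomorphic_on ball 0 1" and d0: "deriv H 0 = 1"
    and bdH: "\<forall>z\<in>ball 0 1. cmod (deriv H z) < L2"
  shows "inj_on (biharmonic_map G H) (ball 0 (rho1 L1 L2))"
proof (rule inj_on_ball_if_inj_on_cballs)
  fix r assume r: "0 \<le> r" "r < rho1 L1 L2"
  then have r1: "r < 1" and rL: "r < L2" using rho1_root(2)[OF L1 L2] L2 by auto
  show "inj_on (biharmonic_map G H) (cball 0 r)"
  proof (rule inj_on_cball_biharmonic_map[OF L1 holG bdG r1])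
    show "cmod ((H u - u) - (H v - v)) \<le> pick_bound L2 r * cmod (u - v)"
      if "u \<in> cball 0 r" "v \<in> cball 0 r" for u v
      using norm_diff_minus_id_le[OF L2 holH d0 bdH r1] that by simp
    have "0 < rho1_poly L1 L2 r / (L2 - r)" using rho1_poly_pos[OF L1 L2 r] rL by simp
    then show "pick_bound L2 r + 2 * L1 * r < 1"
      using one_minus_pick_bound_eq[OF rL, of L1] by linarith
  qed
qed

lemma biharmonic_map_covers_sigma1:
  fixes G H :: "complex \<Rightarrow> complex"
  assumes L1: "L1 \<ge> 0" and L2: "L2 > 1"
    and holG: "G holomorphic_on ball 0 1" and bdG: "\<forall>z\<in>ball 0 1. cmod (G z + z * deriv G z) \<le> L1"
    and holH: "H holomorphic_on ball 0 1" and H0: "H 0 = 0" and d0: "deriv H 0 = 1"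
    and bdH: "\<forall>z\<in>ball 0 1. cmod (deriv H z) < L2"
  shows "ball 0 (sigma1 L1 L2) \<subseteq> biharmonic_map G H ` ball 0 (rho1 L1 L2)"
  unfolding sigma1_eq
proof (rule ball_subset_image_if_radial_lower_bound)
  note \<rho> = rho1_root[OF L1 L2]
  show "0 < rho1 L1 L2" by (fact \<rho>(1))
  show "continuous_on (ball 0 (rho1 L1 L2)) (biharmonic_map G H)"
    by (rule continuous_on_subset[OF continuous_on_biharmonic_map[OF holG holH]]) (use \<rho>(2) in auto)
  show "inj_on (biharmonic_map G H) (ball 0 (rho1 L1 L2))"
    by (rule biharmonic_map_inj_on_rho1[OF L1 L2 holG bdG holH d0 bdH])
  show "biharmonic_map G H 0 = 0" unfolding biharmonic_map_def using H0 by simp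
  show "continuous_on {0..rho1 L1 L2} (sigma1_fun L1 L2)"
    using continuous_on_sigma1_fun[OF L2] \<rho>(2) L2 by simp
  show "mono_on {0..rho1 L1 L2} (sigma1_fun L1 L2)" by (rule mono_on_sigma1_fun[OF L1 L2])
  fix z :: complex assume "norm z < rho1 L1 L2"
  then have z: "cmod z < 1" using \<rho>(2) by simp
  have "sigma1_fun L1 L2 (cmod z) \<le> cmod (H z) - L1 * (cmod z)\<^sup>2"
    unfolding sigma1_fun_def using norm_ge_pick_growth[OF L2 holH H0 d0 bdH z] by simp
  also have "\<dots> \<le> cmod (biharmonic_map G H z)" by (rule norm_biharmonic_map_ge[OF holG bdG z])
  finally show "sigma1_fun L1 L2 (norm z) \<le> norm (biharmonic_map G H z)" by simp
qed

lemma biharmonic_map_ne_at_rho1: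
  fixes G H :: "complex \<Rightarrow> complex"
  assumes L1: "L1 \<ge> 0" and L2: "L2 > 1"
    and holG: "G holomorphic_on ball 0 1" and bdG: "\<forall>z\<in>ball 0 1. cmod (G z + z * deriv G z) \<le> L1"
    and holH: "H holomorphic_on ball 0 1" and d0: "deriv H 0 = 1"
    and bdH: "\<forall>z\<in>ball 0 1. cmod (deriv H z) < L2"
    and z: "cmod z < rho1 L1 L2"
  shows "biharmonic_map G H z \<noteq> biharmonic_map G H (of_real (rho1 L1 L2))"
proof
  assume eq: "biharmonic_map G H z = biharmonic_map G H (of_real (rho1 L1 L2))"
  define \<rho> where "\<rho> = rho1 L1 L2"
  define w where "w = complex_of_real \<rho>"
  note root = rho1_root[OF L1 L2, folded \<rho>_def]
  have w: "cmod w = \<rho>" unfolding w_def using root(1) by simp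
  have "z \<noteq> w" using z w \<rho>_def by auto
  have "1 - 2 * L1 * \<rho> = pick_bound L2 \<rho>"
    using one_minus_pick_bound_eq[of \<rho> L2 L1] root L2 by simp
  then have "pick_bound L2 \<rho> * cmod (z - w) - cmod ((H z - z) - (H w - w)) \<le> 0"
    using norm_diff_biharmonic_map_ge[OF L1 holG bdG root(2), of z w H] z w eq
    unfolding \<rho>_def w_def by simp
  moreover have "cmod ((H z - z) - (H w - w)) < pick_bound L2 \<rho> * cmod (z - w)"
    using norm_diff_minus_id_less[OF L2 holH d0 bdH root(2)] z w \<open>z \<noteq> w\<close> \<rho>_def by simp
  ultimately show False by simp
qed

lemma extremal_H1_deriv:
  assumes L2: "L2 > 1" and z: "cmod z < 1"
  shows "((\<lambda>z. complex_of_real (L2\<^sup>2) * z + complex_of_real (L2 ^ 3 - L2) * Ln (1 - z / complex_of_real L2))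
          has_field_derivative of_real L2 * (1 - of_real L2 * z) / (of_real L2 - z)) (at z)"
proof -
  have "Re z < L2" using z L2 complex_Re_le_cmod[of z] by linarith
  then have "Re (1 - z / complex_of_real L2) > 0" using L2 by (simp add: field_simps)
  then have "1 - z / complex_of_real L2 \<notin> \<real>\<^sub>\<le>\<^sub>0"
    by (auto simp: complex_nonpos_Reals_iff)
  moreover have "complex_of_real L2 - z \<noteq> 0" "complex_of_real L2 \<noteq> 0" using \<open>Re z < L2\<close> L2 by auto
  ultimately have "((\<lambda>z. complex_of_real (L2\<^sup>2) * z + complex_of_real (L2 ^ 3 - L2) * Ln (1 - z / complex_of_real L2))
      has_field_derivative of_real (L2\<^sup>2) + of_real (L2 ^ 3 - L2) * (inverse (1 - z / of_real L2) * - (1 / of_real L2))) (at z)"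
    by (auto intro!: derivative_eq_intros)
  moreover have "of_real (L2\<^sup>2) + of_real (L2 ^ 3 - L2) * (inverse (1 - z / of_real L2) * - (1 / of_real L2))
        = of_real L2 * (1 - of_real L2 * z) / (of_real L2 - z)"
  proof -
    have "inverse (1 - z / of_real L2) = of_real L2 / (of_real L2 - z)"
      using \<open>complex_of_real L2 - z \<noteq> 0\<close> \<open>complex_of_real L2 \<noteq> 0\<close> by (simp add: field_simps)
    then show ?thesis
      using \<open>complex_of_real L2 - z \<noteq> 0\<close> \<open>complex_of_real L2 \<noteq> 0\<close>
      by (simp add: field_simps power2_eq_square power3_eq_cube)
  qed
  ultimately show ?thesis by simp
qed

lemma F1_ext_eq_biharmonic_map:
  "F1_ext L1 L2 = biharmonic_map (\<lambda>z. - complex_of_real L1)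
     (\<lambda>z. complex_of_real (L2\<^sup>2) * z + complex_of_real (L2 ^ 3 - L2) * Ln (1 - z / complex_of_real L2))"
  unfolding F1_ext_def biharmonic_map_def by (simp add: fun_eq_iff algebra_simps)

lemma F1_ext_extremal:
  fixes L1 L2 :: real
  assumes L1: "L1 \<ge> 0" and L2: "L2 > 1"
  defines "G1 \<equiv> (\<lambda>z::complex. - complex_of_real L1)"
    and "H1 \<equiv> (\<lambda>z. complex_of_real (L2\<^sup>2) * z + complex_of_real (L2 ^ 3 - L2) * Ln (1 - z / complex_of_real L2))"
  shows "G1 holomorphic_on ball 0 1 \<and> H1 holomorphic_on ball 0 1 \<and> H1 0 = 0 \<and> deriv H1 0 = 1 \<and>
        (\<forall>z\<in>ball 0 1. cmod (G1 z + z * deriv G1 z) \<le> L1) \<and>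
        (\<forall>z\<in>ball 0 1. cmod (deriv H1 z) < L2) \<and>
        (\<forall>z. F1_ext L1 L2 z = complex_of_real ((cmod z)\<^sup>2) * G1 z + H1 z)"
proof (intro conjI ballI allI)
  have dH: "deriv H1 z = of_real L2 * (1 - of_real L2 * z) / (of_real L2 - z)" if "cmod z < 1" for z
    unfolding H1_def using extremal_H1_deriv[OF L2 that] by (rule DERIV_imp_deriv)
  show "G1 holomorphic_on ball 0 1" unfolding G1_def by simp
  show "H1 holomorphic_on ball 0 1"
    unfolding holomorphic_on_def field_differentiable_def H1_def
    using has_field_derivative_at_within[OF extremal_H1_deriv[OF L2]] by fastforce
  show "H1 0 = 0" unfolding H1_def by simp
  show "deriv H1 0 = 1" using dH[of 0] L2 by simp
  show "cmod (G1 z + z * deriv G1 z) \<le> L1" for z unfolding G1_def using L1 by simp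
  show "cmod (deriv H1 z) < L2" if "z \<in> ball 0 1" for z
  proof -
    have z: "cmod z < 1" using that by simp
    have "(Re z)\<^sup>2 + (Im z)\<^sup>2 < 1" using z by (simp add: cmod_power2[symmetric] power_less_one_iff)
    then have "(L2\<^sup>2 - 1) * ((Re z)\<^sup>2 + (Im z)\<^sup>2) < (L2\<^sup>2 - 1) * 1"
      using L2 by (intro mult_strict_left_mono) (auto simp: power2_eq_square less_1_mult)
    then have "(1 - L2 * Re z)\<^sup>2 + (L2 * Im z)\<^sup>2 < (L2 - Re z)\<^sup>2 + (Im z)\<^sup>2"
      by (simp add: power2_eq_square algebra_simps)
    then have "(cmod (1 - of_real L2 * z))\<^sup>2 < (cmod (of_real L2 - z))\<^sup>2"
      by (simp add: cmod_power2)
    then have lt: "cmod (1 - of_real L2 * z) < cmod (of_real L2 - z)"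
      by (meson norm_ge_zero power2_less_imp_less)
    then have "L2 * cmod (1 - of_real L2 * z) / cmod (of_real L2 - z) < L2"
      using L2 by (simp add: divide_less_eq)
    then show ?thesis using dH[OF z] L2 by (simp add: norm_mult norm_divide)
  qed
  show "F1_ext L1 L2 z = complex_of_real ((cmod z)\<^sup>2) * G1 z + H1 z" for z
    unfolding F1_ext_eq_biharmonic_map G1_def H1_def biharmonic_map_def ..
qed

lemma F1_ext_of_real:
  assumes "L2 > 1" "x < L2"
  shows "F1_ext L1 L2 (complex_of_real x) = complex_of_real (sigma1_fun L1 L2 x)"
proof -
  have "Ln (1 - complex_of_real x / complex_of_real L2) = Ln (complex_of_real (1 - x / L2))" by simp
  also have "\<dots> = complex_of_real (ln (1 - x / L2))"
    by (rule Ln_of_real) (use assms in \<open>simp add: field_simps\<close>)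
  finally show ?thesis unfolding F1_ext_def sigma1_fun_def pick_growth_def by (simp add: power2_eq_square)
qed

lemma F1_ext_not_inj_on:
  assumes L1: "L1 \<ge> 0" and L2: "L2 > 1" and r: "rho1 L1 L2 < r" "r \<le> 1"
  shows "\<not> inj_on (F1_ext L1 L2) (ball 0 r)"
proof
  assume inj: "inj_on (F1_ext L1 L2) (ball 0 r)"
  define \<rho> where "\<rho> = rho1 L1 L2"
  define \<sigma> where "\<sigma> = sigma1_fun L1 L2"
  have \<rho>: "0 < \<rho>" "\<rho> < 1" using rho1_root[OF L1 L2] \<rho>_def by auto
  have \<sigma>\<rho>: "\<sigma> \<rho> > 0" using sigma1_pos[OF L1 L2] unfolding \<sigma>_def \<rho>_def sigma1_eq .
  obtain \<delta> where \<delta>: "\<delta> > 0" "\<And>x. \<rho> < x \<Longrightarrow> x < \<rho> + \<delta> \<Longrightarrow> \<sigma> x < \<sigma> \<rho>"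
    using sigma1_fun_less_right[OF L1 L2] unfolding \<sigma>_def \<rho>_def sigma1_eq by blast
  \<comment> \<open>\<sigma> rises on [0, \<rho>] and falls just after \<rho>, so a value is taken twice on the real axis\<close>
  have "(\<sigma> \<longlongrightarrow> \<sigma> \<rho>) (at_right \<rho>)"
    using continuous_on_Icc_at_rightD[OF continuous_on_sigma1_fun[OF L2, of 1 \<rho> L1]] \<rho> L2
    unfolding \<sigma>_def by simp
  then have "eventually (\<lambda>x. \<sigma> x > 0) (at_right \<rho>)" using \<sigma>\<rho> by (rule order_tendstoD(1))
  moreover have "eventually (\<lambda>x. x \<in> {\<rho><..<min r (\<rho> + \<delta>)}) (at_right \<rho>)"
    using r \<delta>(1) \<rho>_def by (intro eventually_at_right_real) simp
  ultimately have "\<exists>x. \<sigma> x > 0 \<and> x \<in> {\<rho><..<min r (\<rho> + \<delta>)}"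
    by (rule eventually_happens'[OF trivial_limit_at_right_real eventually_conj])
  then obtain x1 where x1: "0 < \<sigma> x1" "\<rho> < x1" "x1 < r" "x1 < \<rho> + \<delta>" by auto
  have "\<sigma> x1 < \<sigma> \<rho>" using \<delta>(2) x1 by simp
  moreover have "\<sigma> 0 = 0" unfolding \<sigma>_def by simp
  ultimately obtain x0 where x0: "0 \<le> x0" "x0 \<le> \<rho>" "\<sigma> x0 = \<sigma> x1"
    using IVT'[of \<sigma> 0 "\<sigma> x1" \<rho>] x1(1) \<rho> continuous_on_sigma1_fun[OF L2, of \<rho> 0 L1] L2
    unfolding \<sigma>_def by auto
  have "F1_ext L1 L2 (of_real x0) = F1_ext L1 L2 (of_real x1)"
    using F1_ext_of_real[OF L2] x0 x1 \<rho> r L2 unfolding \<sigma>_def by simp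
  moreover have "of_real x0 \<in> ball (0::complex) r" "of_real x1 \<in> ball (0::complex) r"
    using x0 x1 \<rho> by auto
  ultimately have "(of_real x0 :: complex) = of_real x1" using inj by (meson inj_onD)
  then show False using x0 x1 by simp
qed

lemma F1_ext_not_covers:
  assumes L1: "L1 \<ge> 0" and L2: "L2 > 1" and s: "sigma1 L1 L2 < s"
  shows "\<not> ball 0 s \<subseteq> F1_ext L1 L2 ` ball 0 (rho1 L1 L2)"
proof
  assume sub: "ball 0 s \<subseteq> F1_ext L1 L2 ` ball 0 (rho1 L1 L2)"
  have "complex_of_real (sigma1 L1 L2) \<in> ball 0 s" using sigma1_pos[OF L1 L2] s by simp
  with sub obtain z where "z \<in> ball 0 (rho1 L1 L2)" and "F1_ext L1 L2 z = of_real (sigma1 L1 L2)"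
    by (metis imageE subsetD)
  moreover have "F1_ext L1 L2 (of_real (rho1 L1 L2)) = of_real (sigma1 L1 L2)"
    using F1_ext_of_real[OF L2] rho1_root[OF L1 L2] L2 sigma1_eq by simp
  moreover have "F1_ext L1 L2 z \<noteq> F1_ext L1 L2 (of_real (rho1 L1 L2))"
    unfolding F1_ext_eq_biharmonic_map using F1_ext_extremal[OF L1 L2] \<open>z \<in> ball 0 (rho1 L1 L2)\<close>
    by (intro biharmonic_map_ne_at_rho1[OF L1 L2]) auto
  ultimately show False by simp
qed

section \<open>Part (2): the case H = id\<close>

lemma eq_id_if_norm_less_1:
  fixes H :: "complex \<Rightarrow> complex"
  assumes holH: "H holomorphic_on ball 0 1" and H0: "H 0 = 0" and d0: "deriv H 0 = 1"
    and bd: "\<forall>z\<in>ball 0 1. cmod (H z) < 1" and z: "z \<in> ball 0 1"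
  shows "H z = z"
proof -
  obtain \<alpha> where \<alpha>: "\<And>z. cmod z < 1 \<Longrightarrow> H z = \<alpha> * z"
    using Schwarz_Lemma(3)[OF holH H0, of 0] bd d0 by auto
  have "(H has_field_derivative 1) (at 0)"
    using holomorphic_derivI[OF holH open_ball, of 0 UNIV] d0 by simp
  then have "((\<lambda>z. \<alpha> * z) has_field_derivative 1) (at 0)"
    by (rule has_field_derivative_transform_within_open[where S="ball 0 1"]) (auto intro: \<alpha>)
  then have "\<alpha> = 1"
    using DERIV_unique DERIV_cmult_right[OF DERIV_ident, of \<alpha> 0] by fastforce
  then show ?thesis using \<alpha> z by simp
qed

lemma eq_id_if_norm_deriv_le_1:
  fixes H :: "complex \<Rightarrow> complex"
  assumes holH: "H holomorphic_on ball 0 1" and H0: "H 0 = 0" and d0: "deriv H 0 = 1"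
    and bd: "\<forall>z\<in>ball 0 1. cmod (deriv H z) \<le> 1" and z: "z \<in> ball 0 1"
  shows "H z = z"
proof -
  \<comment> \<open>|H'| attains its maximum 1 at the interior point 0\<close>
  have "deriv H constant_on ball 0 1"
    by (rule maximum_modulus_principle[OF holomorphic_deriv[OF holH open_ball] open_ball _ open_ball subset_refl, of 0])
       (use bd d0 in auto)
  then have "deriv H w = 1" if "w \<in> ball 0 1" for w
    using d0 that unfolding constant_on_def by (metis centre_in_ball zero_less_one)
  then have "\<exists>k. \<forall>x\<in>ball 0 1. H x - x = k"
    using holomorphic_derivI[OF holH open_ball]
    by (intro has_field_derivative_zero_constant) (auto intro!: derivative_eq_intros)
  then obtain k where k: "\<And>x. x \<in> ball 0 1 \<Longrightarrow> H x - x = k" by blast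
  then show ?thesis using k[of 0] k[OF z] H0 by simp
qed

lemma rho2_pos: "L1 \<ge> 0 \<Longrightarrow> 0 < rho2 L1"
  and rho2_le_1: "rho2 L1 \<le> 1"
  and rho2_le: "L1 \<ge> 0 \<Longrightarrow> 2 * L1 * rho2 L1 \<le> 1"
  unfolding rho2_def by (auto simp: field_simps)

lemma two_mult_less_1_if_less_rho2:
  assumes "L1 \<ge> 0" "0 \<le> r" "r < rho2 L1"
  shows "2 * L1 * r < 1"
proof (cases "L1 = 0")
  case False
  then have "2 * L1 * r < 2 * L1 * rho2 L1" using assms by simp
  then show ?thesis using rho2_le[OF assms(1)] by simp
qed simp

lemma biharmonic_map_inj_on_rho2:
  fixes G H :: "complex \<Rightarrow> complex"
  assumes L1: "L1 \<ge> 0"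
    and holG: "G holomorphic_on ball 0 1" and bdG: "\<forall>z\<in>ball 0 1. cmod (G z + z * deriv G z) \<le> L1"
    and H: "\<And>z. z \<in> ball 0 1 \<Longrightarrow> H z = z"
  shows "inj_on (biharmonic_map G H) (ball 0 (rho2 L1))"
proof (rule inj_on_ball_if_inj_on_cballs)
  fix r assume r: "0 \<le> r" "r < rho2 L1"
  then have r1: "r < 1" using rho2_le_1[of L1] by simp
  show "inj_on (biharmonic_map G H) (cball 0 r)"
  proof (rule inj_on_cball_biharmonic_map[OF L1 holG bdG r1, where c=0])
    show "cmod ((H u - u) - (H v - v)) \<le> 0 * cmod (u - v)"
      if "u \<in> cball 0 r" "v \<in> cball 0 r" for u v
      using H[of u] H[of v] that r1 by simp
    show "0 + 2 * L1 * r < 1" using two_mult_less_1_if_less_rho2[OF L1 r] by simp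
  qed
qed

lemma biharmonic_map_covers_sigma2:
  fixes G H :: "complex \<Rightarrow> complex"
  assumes L1: "L1 \<ge> 0"
    and holG: "G holomorphic_on ball 0 1" and bdG: "\<forall>z\<in>ball 0 1. cmod (G z + z * deriv G z) \<le> L1"
    and holH: "H holomorphic_on ball 0 1" and H: "\<And>z. z \<in> ball 0 1 \<Longrightarrow> H z = z"
  shows "ball 0 (sigma2 L1) \<subseteq> biharmonic_map G H ` ball 0 (rho2 L1)"
proof -
  have "ball 0 ((\<lambda>t. t - L1 * t\<^sup>2) (rho2 L1)) \<subseteq> biharmonic_map G H ` ball 0 (rho2 L1)"
  proof (rule ball_subset_image_if_radial_lower_bound)
    show "0 < rho2 L1" by (rule rho2_pos[OF L1])
    show "continuous_on (ball 0 (rho2 L1)) (biharmonic_map G H)"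
      by (rule continuous_on_subset[OF continuous_on_biharmonic_map[OF holG holH]])
         (use rho2_le_1[of L1] in auto)
    show "inj_on (biharmonic_map G H) (ball 0 (rho2 L1))"
      by (rule biharmonic_map_inj_on_rho2[OF L1 holG bdG H])
    show "biharmonic_map G H 0 = 0" unfolding biharmonic_map_def using H[of 0] by simp
    show "continuous_on {0..rho2 L1} (\<lambda>t. t - L1 * t\<^sup>2)" by (intro continuous_intros)
    show "mono_on {0..rho2 L1} (\<lambda>t. t - L1 * t\<^sup>2)"
    proof (rule mono_onI)
      fix x y assume xy: "x \<in> {0..rho2 L1}" "y \<in> {0..rho2 L1}" "x \<le> y"
      have "L1 * (x + y) \<le> L1 * (2 * rho2 L1)" using xy L1 by (intro mult_left_mono) auto
      then have "0 \<le> (y - x) * (1 - L1 * (x + y))" using xy rho2_le[OF L1] by simp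
      then show "x - L1 * x\<^sup>2 \<le> y - L1 * y\<^sup>2" by (simp add: algebra_simps power2_eq_square)
    qed
    fix z :: complex assume "norm z < rho2 L1"
    then have z: "cmod z < 1" using rho2_le_1[of L1] by simp
    then show "norm z - L1 * (norm z)\<^sup>2 \<le> norm (biharmonic_map G H z)"
      using norm_biharmonic_map_ge[OF holG bdG z, of H] H[of z] by simp
  qed
  then show ?thesis unfolding sigma2_def by simp
qed

lemma F2_ext_extremal:
  assumes L1: "L1 \<ge> 0"
  defines "G2 \<equiv> (\<lambda>z::complex. complex_of_real L1)" and "H2 \<equiv> (\<lambda>z::complex. z)"
  shows "(\<forall>z\<in>ball 0 1. cmod (G2 z + z * deriv G2 z) \<le> L1) \<and>
        (\<forall>z\<in>ball 0 1. cmod (H2 z) < 1) \<and> (\<forall>z\<in>ball 0 1. cmod (deriv H2 z) \<le> 1) \<and>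
        (\<forall>z. F2_ext L1 z = complex_of_real ((cmod z)\<^sup>2) * G2 z + H2 z)"
  unfolding G2_def H2_def F2_ext_def using L1 by (simp add: mult.commute)

lemma F2_ext_of_real: "F2_ext L1 (complex_of_real x) = complex_of_real (L1 * x\<^sup>2 + x)"
  unfolding F2_ext_def by simp

lemma F2_ext_not_inj_on:
  assumes L1: "L1 \<ge> 0" and r: "rho2 L1 < r" "r \<le> 1"
  shows "\<not> inj_on (F2_ext L1) (ball 0 r)"
proof
  assume inj: "inj_on (F2_ext L1) (ball 0 r)"
  have "\<not> L1 \<le> 1/2" using r unfolding rho2_def by auto
  then have \<rho>: "2 * L1 * rho2 L1 = 1" "rho2 L1 > 0" unfolding rho2_def by auto
  \<comment> \<open>the real parabola L1 x^2 + x is symmetric about its vertex -rho2\<close>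
  define e where "e = (r - rho2 L1) / 2"
  have e: "0 < e" "rho2 L1 + e < r" using r unfolding e_def by (auto simp: field_simps)
  have "L1 * (- rho2 L1 - e)\<^sup>2 + (- rho2 L1 - e) = L1 * (- rho2 L1 + e)\<^sup>2 + (- rho2 L1 + e)"
    using \<rho>(1) by (simp add: power2_eq_square algebra_simps)
  then have "F2_ext L1 (of_real (- rho2 L1 - e)) = F2_ext L1 (of_real (- rho2 L1 + e))"
    unfolding F2_ext_of_real by simp
  moreover have "\<bar>- rho2 L1 - e\<bar> < r" "\<bar>- rho2 L1 + e\<bar> < r" using \<rho> e by auto
  then have "of_real (- rho2 L1 - e) \<in> ball (0::complex) r" "of_real (- rho2 L1 + e) \<in> ball (0::complex) r"
    by (simp_all only: mem_ball_0 norm_of_real)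
  ultimately have "(of_real (- rho2 L1 - e) :: complex) = of_real (- rho2 L1 + e)"
    using inj by (meson inj_onD)
  then show False using e by simp
qed

lemma F2_ext_not_covers:
  assumes L1: "L1 \<ge> 0" and s: "sigma2 L1 < s"
  shows "\<not> ball 0 s \<subseteq> F2_ext L1 ` ball 0 (rho2 L1)"
proof
  assume sub: "ball 0 s \<subseteq> F2_ext L1 ` ball 0 (rho2 L1)"
  define \<rho> where "\<rho> = rho2 L1"
  have \<rho>: "0 < \<rho>" "2 * L1 * \<rho> \<le> 1" using rho2_pos[OF L1] rho2_le[OF L1] \<rho>_def by auto
  have \<sigma>: "sigma2 L1 = \<rho> - L1 * \<rho>\<^sup>2" unfolding sigma2_def \<rho>_def ..
  have "L1 * \<rho> * \<rho> \<le> 1 * \<rho>" using \<rho> by (intro mult_right_mono) auto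
  then have "sigma2 L1 \<ge> 0" unfolding \<sigma> by (simp add: power2_eq_square)
  \<comment> \<open>the real solutions of L1 x^2 + x = -sigma2 are -rho2 and, if L1 > 0, rho2 - 1/L1; neither lies in the disc\<close>
  then have "complex_of_real (- sigma2 L1) \<in> ball 0 s" using s by simp
  with sub obtain z where z: "z \<in> ball 0 \<rho>" and Fz: "F2_ext L1 z = complex_of_real (- sigma2 L1)"
    unfolding \<rho>_def by (metis imageE subsetD)
  have "Im z = 0" using arg_cong[OF Fz, of Im] unfolding F2_ext_def by simp
  then obtain x where x: "z = complex_of_real x" by (metis complex_is_Real_iff Reals_cases)
  have "L1 * x\<^sup>2 + x = - sigma2 L1" using Fz unfolding x F2_ext_of_real of_real_eq_iff .
  then have "(x + \<rho>) * (L1 * (x - \<rho>) + 1) = 0" unfolding \<sigma> by (simp add: power2_eq_square algebra_simps)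
  moreover have "\<bar>x\<bar> < \<rho>" using z x by simp
  moreover have "L1 * (x - \<rho>) + 1 > 0"
  proof (cases "L1 = 0")
    case False
    then have "L1 * (- 2 * \<rho>) < L1 * (x - \<rho>)"
      using \<open>\<bar>x\<bar> < \<rho>\<close> L1 by (intro mult_strict_left_mono) auto
    then show ?thesis using \<rho>(2) by simp
  qed simp
  ultimately show False by simp
qed

theorem corollary2p1:
  fixes L1 L2 :: real
  assumes L1: "L1 \<ge> 0" and L2: "L2 > 1"
  shows
   "(\<forall>G H :: complex \<Rightarrow> complex.
       G holomorphic_on ball 0 1 \<and> H holomorphic_on ball 0 1 \<and> H 0 = 0 \<and> deriv H 0 = 1 \<and>
       (\<forall>z\<in>ball 0 1. cmod (G z + z * deriv G z) \<le> L1) \<and>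
       (\<forall>z\<in>ball 0 1. cmod (deriv H z) < L2)
       \<longrightarrow> inj_on (\<lambda>z. complex_of_real ((cmod z)\<^sup>2) * G z + H z) (ball 0 (rho1 L1 L2)) \<and>
           ball 0 (sigma1 L1 L2) \<subseteq> (\<lambda>z. complex_of_real ((cmod z)\<^sup>2) * G z + H z) ` ball 0 (rho1 L1 L2))
    \<and>
    (let G1 = (\<lambda>z::complex. - complex_of_real L1);
         H1 = (\<lambda>z. complex_of_real (L2\<^sup>2) * z + complex_of_real (L2 ^ 3 - L2) * Ln (1 - z / complex_of_real L2))
     in G1 holomorphic_on ball 0 1 \<and> H1 holomorphic_on ball 0 1 \<and> H1 0 = 0 \<and> deriv H1 0 = 1 \<and>
        (\<forall>z\<in>ball 0 1. cmod (G1 z + z * deriv G1 z) \<le> L1) \<and>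
        (\<forall>z\<in>ball 0 1. cmod (deriv H1 z) < L2) \<and>
        (\<forall>z. F1_ext L1 L2 z = complex_of_real ((cmod z)\<^sup>2) * G1 z + H1 z))
    \<and>
    (\<forall>r. rho1 L1 L2 < r \<and> r \<le> 1 \<longrightarrow> \<not> inj_on (F1_ext L1 L2) (ball 0 r))
    \<and>
    (\<forall>s. sigma1 L1 L2 < s \<longrightarrow> \<not> ball 0 s \<subseteq> F1_ext L1 L2 ` ball 0 (rho1 L1 L2))
    \<and>
    (\<forall>G H :: complex \<Rightarrow> complex.
       G holomorphic_on ball 0 1 \<and> H holomorphic_on ball 0 1 \<and> H 0 = 0 \<and> deriv H 0 = 1 \<and>
       (\<forall>z\<in>ball 0 1. cmod (G z + z * deriv G z) \<le> L1) \<and>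
       ((\<forall>z\<in>ball 0 1. cmod (H z) < 1) \<or> (\<forall>z\<in>ball 0 1. cmod (deriv H z) \<le> 1))
       \<longrightarrow> inj_on (\<lambda>z. complex_of_real ((cmod z)\<^sup>2) * G z + H z) (ball 0 (rho2 L1)) \<and>
           ball 0 (sigma2 L1) \<subseteq> (\<lambda>z. complex_of_real ((cmod z)\<^sup>2) * G z + H z) ` ball 0 (rho2 L1))
    \<and>
    (let G2 = (\<lambda>z::complex. complex_of_real L1); H2 = (\<lambda>z::complex. z)
     in (\<forall>z\<in>ball 0 1. cmod (G2 z + z * deriv G2 z) \<le> L1) \<and>
        (\<forall>z\<in>ball 0 1. cmod (H2 z) < 1) \<and> (\<forall>z\<in>ball 0 1. cmod (deriv H2 z) \<le> 1) \<and>
        (\<forall>z. F2_ext L1 z = complex_of_real ((cmod z)\<^sup>2) * G2 z + H2 z))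
    \<and>
    (\<forall>r. rho2 L1 < r \<and> r \<le> 1 \<longrightarrow> \<not> inj_on (F2_ext L1) (ball 0 r))
    \<and>
    (\<forall>s. sigma2 L1 < s \<longrightarrow> \<not> ball 0 s \<subseteq> F2_ext L1 ` ball 0 (rho2 L1))"
proof -
  have part1: "inj_on (biharmonic_map G H) (ball 0 (rho1 L1 L2)) \<and>
      ball 0 (sigma1 L1 L2) \<subseteq> biharmonic_map G H ` ball 0 (rho1 L1 L2)"
    if "G holomorphic_on ball 0 1 \<and> H holomorphic_on ball 0 1 \<and> H 0 = 0 \<and> deriv H 0 = 1 \<and>
       (\<forall>z\<in>ball 0 1. cmod (G z + z * deriv G z) \<le> L1) \<and>
       (\<forall>z\<in>ball 0 1. cmod (deriv H z) < L2)" for G H :: "complex \<Rightarrow> complex"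
    using that biharmonic_map_inj_on_rho1[OF L1 L2] biharmonic_map_covers_sigma1[OF L1 L2] by blast
  have part2: "inj_on (biharmonic_map G H) (ball 0 (rho2 L1)) \<and>
      ball 0 (sigma2 L1) \<subseteq> biharmonic_map G H ` ball 0 (rho2 L1)"
    if hyps: "G holomorphic_on ball 0 1 \<and> H holomorphic_on ball 0 1 \<and> H 0 = 0 \<and> deriv H 0 = 1 \<and>
       (\<forall>z\<in>ball 0 1. cmod (G z + z * deriv G z) \<le> L1) \<and>
       ((\<forall>z\<in>ball 0 1. cmod (H z) < 1) \<or> (\<forall>z\<in>ball 0 1. cmod (deriv H z) \<le> 1))"
    for G H :: "complex \<Rightarrow> complex"
  proof -
    have "H z = z" if "z \<in> ball 0 1" for z
      using hyps eq_id_if_norm_less_1 eq_id_if_norm_deriv_le_1 that by blast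
    then show ?thesis
      using hyps biharmonic_map_inj_on_rho2[OF L1] biharmonic_map_covers_sigma2[OF L1] by blast
  qed
  show ?thesis
    using part1 part2 F1_ext_extremal[OF L1 L2] F1_ext_not_inj_on[OF L1 L2] F1_ext_not_covers[OF L1 L2]
      F2_ext_extremal[OF L1] F2_ext_not_inj_on[OF L1] F2_ext_not_covers[OF L1]
    unfolding Let_def biharmonic_map_def[abs_def] by blast
qed

end
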